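(* Let $\mathcal M$ be a Polish metric structure and $\mathcal N$ a good countable approximating substructure of $\mathcal M$. Then for every $n$ and every co-meagre $A\subseteq\mathrm{Aut}(\mathcal N)^n$, the $\partial$-closure $\overline{A}^\partial$ computed in $\mathrm{Aut}(\mathcal M)^n$ is co-meagre in $\mathrm{Aut}(\mathcal M)^n$. In particular, if $\mathrm{Aut}(\mathcal N)$ has ample generics then the topometric group $(\mathrm{Aut}(\mathcal M),\tau,\partial)$ has ample generics.
   Context: A metric structure $\mathcal M$ is a complete bounded metric space $(M,d)$ with a family of uniformly continuous bounded predicates $P_i\colon M^{k_i}\to\mathbb R$ (including $d$) and uniformly continuous functions $f_j\colon M^{\ell_j}\to M$; it is Polish if $M$ is separable. $\mathrm{Aut}(\mathcal M)$ is the group of bijections preserving all predicates and functions, with $\tau$ the topology of pointwise convergence and $\partial(g,h)=\sup_{x\in M}d(gx,hx)$ the metric of uniform convergence; on $\mathrm{Aut}(\mathcal M)^n$ use the product topology and supremum metric. For $B$ in a metric space, $(B)_\varepsilon=\{y\colon\partial(y,B)<\varepsilon\}$. A countable (classical) structure $\mathcal N$ is a countable approximating substructure of $\mathcal M$ if its universe $N$ is a countable dense subset of $(M,d)$, every automorphism of $\mathcal N$ extends (uniquely) to an automorphism of $\mathcal M$, and $\mathrm{Aut}(\mathcal N)$ is dense in $\mathrm{Aut}(\mathcal M)$; $\mathrm{Aut}(\mathcal N)$ carries the topology of pointwise convergence on the discrete set $N$. It is good if moreover for every open $U\subseteq\mathrm{Aut}(\mathcal N)$ (in the topology of $\mathrm{Aut}(\mathcal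 N)$) and $\varepsilon>0$, the set $(U)_\varepsilon$ computed in $(\mathrm{Aut}(\mathcal M),\partial)$ is $\tau$-open. A Polish group $K$ has ample generics if for every $n$ there is $\bar g\in K^n$ whose diagonal conjugacy class $\{(kg_0k^{-1},\dots,kg_{n-1}k^{-1})\colon k\in K\}$ is co-meagre in $K^n$. A topometric group $(G,\tau,\partial)$ has ample generics if for every $n$ and $\varepsilon>0$ there is $\bar g\in G^n$ whose diagonal conjugacy class $C$ satisfies that $(C)_\varepsilon$ is co-meagre in $(G^n,\tau)$. *)

theory Defs
  imports "HOL-Analysis.Analysis"
begin

definition nowhere_dense_in :: "'a topology \<Rightarrow> 'a set \<Rightarrow> bool" where
  "nowhere_dense_in X S \<longleftrightarrow> S \<subseteq> topspace X \<and> X interior_of (X closure_of S) = {}"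

definition meagre_in :: "'a topology \<Rightarrow> 'a set \<Rightarrow> bool" where
  "meagre_in X S \<longleftrightarrow>
     (\<exists>\<F>. countable \<F> \<and> (\<forall>T\<in>\<F>. nowhere_dense_in X T) \<and> S \<subseteq> \<Union>\<F>)"

definition comeagre_in :: "'a topology \<Rightarrow> 'a set \<Rightarrow> bool" where
  "comeagre_in X S \<longleftrightarrow> S \<subseteq> topspace X \<and> meagre_in X (topspace X - S)"

text \<open>The universe of the metric structure is the whole type 'a, with metric d.
  Predicates are indexed by 'i, P i has arity arP i and is applied to lists of that length;
  functions are indexed by 'j, f j has arity arF j.\<close>

definition unif_cont_pred :: "('a \<Rightarrow> 'a \<Rightarrow> real) \<Rightarrow> nat \<Rightarrow> ('a list \<Rightarrow> real) \<Rightarrow> bool" where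
  "unif_cont_pred d k P \<longleftrightarrow>
     (\<forall>\<epsilon>>0. \<exists>\<delta>>0. \<forall>xs ys. length xs = k \<longrightarrow> length ys = k \<longrightarrow>
        (\<forall>i<k. d (xs ! i) (ys ! i) < \<delta>) \<longrightarrow> \<bar>P xs - P ys\<bar> < \<epsilon>)"

definition unif_cont_fun :: "('a \<Rightarrow> 'a \<Rightarrow> real) \<Rightarrow> nat \<Rightarrow> ('a list \<Rightarrow> 'a) \<Rightarrow> bool" where
  "unif_cont_fun d k f \<longleftrightarrow>
     (\<forall>\<epsilon>>0. \<exists>\<delta>>0. \<forall>xs ys. length xs = k \<longrightarrow> length ys = k \<longrightarrow>
        (\<forall>i<k. d (xs ! i) (ys ! i) < \<delta>) \<longrightarrow> d (f xs) (f ys) < \<epsilon>)"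

definition metric_structure ::
  "('a \<Rightarrow> 'a \<Rightarrow> real) \<Rightarrow> ('i \<Rightarrow> nat) \<Rightarrow> ('i \<Rightarrow> 'a list \<Rightarrow> real)
    \<Rightarrow> ('j \<Rightarrow> nat) \<Rightarrow> ('j \<Rightarrow> 'a list \<Rightarrow> 'a) \<Rightarrow> bool" where
  "metric_structure d arP P arF f \<longleftrightarrow>
     Metric_space UNIV d \<and> Metric_space.mcomplete UNIV d \<and>
     (\<exists>B. \<forall>x y. d x y \<le> B) \<and>
     (\<forall>i. unif_cont_pred d (arP i) (P i) \<and>
          (\<exists>B. \<forall>xs. length xs = arP i \<longrightarrow> \<bar>P i xs\<bar> \<le> B)) \<and>
     (\<forall>j. unif_cont_fun d (arF j) (f j))"

definition polish_metric_structure ::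
  "('a \<Rightarrow> 'a \<Rightarrow> real) \<Rightarrow> ('i \<Rightarrow> nat) \<Rightarrow> ('i \<Rightarrow> 'a list \<Rightarrow> real)
    \<Rightarrow> ('j \<Rightarrow> nat) \<Rightarrow> ('j \<Rightarrow> 'a list \<Rightarrow> 'a) \<Rightarrow> bool" where
  "polish_metric_structure d arP P arF f \<longleftrightarrow>
     metric_structure d arP P arF f \<and> separable_space (Metric_space.mtopology UNIV d)"

definition AutM ::
  "('a \<Rightarrow> 'a \<Rightarrow> real) \<Rightarrow> ('i \<Rightarrow> nat) \<Rightarrow> ('i \<Rightarrow> 'a list \<Rightarrow> real)
    \<Rightarrow> ('j \<Rightarrow> nat) \<Rightarrow> ('j \<Rightarrow> 'a list \<Rightarrow> 'a) \<Rightarrow> ('a \<Rightarrow> 'a) set" where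
  "AutM d arP P arF f =
     {g. bij g \<and> (\<forall>x y. d (g x) (g y) = d x y) \<and>
         (\<forall>i xs. length xs = arP i \<longrightarrow> P i (map g xs) = P i xs) \<and>
         (\<forall>j xs. length xs = arF j \<longrightarrow> g (f j xs) = f j (map g xs))}"

definition tauM ::
  "('a \<Rightarrow> 'a \<Rightarrow> real) \<Rightarrow> ('i \<Rightarrow> nat) \<Rightarrow> ('i \<Rightarrow> 'a list \<Rightarrow> real)
    \<Rightarrow> ('j \<Rightarrow> nat) \<Rightarrow> ('j \<Rightarrow> 'a list \<Rightarrow> 'a) \<Rightarrow> ('a \<Rightarrow> 'a) topology" where
  "tauM d arP P arF f =
     subtopology (product_topology (\<lambda>_. Metric_space.mtopology UNIV d) UNIV) (AutM d arP P arF f)"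

definition unif_dist :: "('a \<Rightarrow> 'a \<Rightarrow> real) \<Rightarrow> ('a \<Rightarrow> 'a) \<Rightarrow> ('a \<Rightarrow> 'a) \<Rightarrow> real" where
  "unif_dist d g h = (SUP x. d (g x) (h x))"

text \<open>n-tuples are functions on {..<n} (extensional), with the product topology and the
  supremum metric (with the convention that the empty supremum is 0).\<close>

definition tuple_dist ::
  "('a \<Rightarrow> 'a \<Rightarrow> real) \<Rightarrow> nat \<Rightarrow> (nat \<Rightarrow> 'a \<Rightarrow> 'a) \<Rightarrow> (nat \<Rightarrow> 'a \<Rightarrow> 'a) \<Rightarrow> real" where
  "tuple_dist d n gs hs = Sup (insert 0 ((\<lambda>i. unif_dist d (gs i) (hs i)) ` {..<n}))"

definition power_top :: "'b topology \<Rightarrow> nat \<Rightarrow> (nat \<Rightarrow> 'b) topology" where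
  "power_top X n = product_topology (\<lambda>_. X) {..<n}"

definition tuple_nbhd ::
  "('a \<Rightarrow> 'a \<Rightarrow> real) \<Rightarrow> ('a \<Rightarrow> 'a) set \<Rightarrow> nat \<Rightarrow> (nat \<Rightarrow> 'a \<Rightarrow> 'a) set \<Rightarrow> real
    \<Rightarrow> (nat \<Rightarrow> 'a \<Rightarrow> 'a) set" where
  "tuple_nbhd d G n B \<epsilon> =
     {y \<in> PiE {..<n} (\<lambda>_. G). \<exists>b\<in>B. tuple_dist d n y b < \<epsilon>}"

definition tuple_dclosure ::
  "('a \<Rightarrow> 'a \<Rightarrow> real) \<Rightarrow> ('a \<Rightarrow> 'a) set \<Rightarrow> nat \<Rightarrow> (nat \<Rightarrow> 'a \<Rightarrow> 'a) set
    \<Rightarrow> (nat \<Rightarrow> 'a \<Rightarrow> 'a) set" where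
  "tuple_dclosure d G n B =
     {y \<in> PiE {..<n} (\<lambda>_. G). \<forall>\<epsilon>>0. \<exists>b\<in>B. tuple_dist d n y b < \<epsilon>}"

text \<open>Its automorphisms
  are represented as maps N \<rightarrow> N that are extensional outside N.\<close>

definition classical_structure ::
  "'a set \<Rightarrow> ('r \<Rightarrow> nat) \<Rightarrow> ('r \<Rightarrow> 'a list \<Rightarrow> bool)
    \<Rightarrow> ('k \<Rightarrow> nat) \<Rightarrow> ('k \<Rightarrow> 'a list \<Rightarrow> 'a) \<Rightarrow> bool" where
  "classical_structure N arR R arF F \<longleftrightarrow>
     (\<forall>k xs. set xs \<subseteq> N \<longrightarrow> length xs = arF k \<longrightarrow> F k xs \<in> N)"

definition AutN ::
  "'a set \<Rightarrow> ('r \<Rightarrow> nat) \<Rightarrow> ('r \<Rightarrow> 'a list \<Rightarrow> bool)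
    \<Rightarrow> ('k \<Rightarrow> nat) \<Rightarrow> ('k \<Rightarrow> 'a list \<Rightarrow> 'a) \<Rightarrow> ('a \<Rightarrow> 'a) set" where
  "AutN N arR R arF F =
     {h \<in> extensional N. bij_betw h N N \<and>
        (\<forall>r xs. set xs \<subseteq> N \<longrightarrow> length xs = arR r \<longrightarrow> (R r (map h xs) \<longleftrightarrow> R r xs)) \<and>
        (\<forall>k xs. set xs \<subseteq> N \<longrightarrow> length xs = arF k \<longrightarrow> h (F k xs) = F k (map h xs))}"

definition tauN ::
  "'a set \<Rightarrow> ('r \<Rightarrow> nat) \<Rightarrow> ('r \<Rightarrow> 'a list \<Rightarrow> bool)
    \<Rightarrow> ('k \<Rightarrow> nat) \<Rightarrow> ('k \<Rightarrow> 'a list \<Rightarrow> 'a) \<Rightarrow> ('a \<Rightarrow> 'a) topology" where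
  "tauN N arR R arF F =
     subtopology (product_topology (\<lambda>_. discrete_topology N) N) (AutN N arR R arF F)"

definition ext_aut :: "('a \<Rightarrow> 'a) set \<Rightarrow> 'a set \<Rightarrow> ('a \<Rightarrow> 'a) \<Rightarrow> ('a \<Rightarrow> 'a)" where
  "ext_aut G N h = (THE g. g \<in> G \<and> (\<forall>x\<in>N. g x = h x))"

definition countable_approx_substructure ::
  "('a \<Rightarrow> 'a \<Rightarrow> real) \<Rightarrow> ('i \<Rightarrow> nat) \<Rightarrow> ('i \<Rightarrow> 'a list \<Rightarrow> real)
    \<Rightarrow> ('j \<Rightarrow> nat) \<Rightarrow> ('j \<Rightarrow> 'a list \<Rightarrow> 'a)
    \<Rightarrow> 'a set \<Rightarrow> ('r \<Rightarrow> nat) \<Rightarrow> ('r \<Rightarrow> 'a list \<Rightarrow> bool)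
    \<Rightarrow> ('k \<Rightarrow> nat) \<Rightarrow> ('k \<Rightarrow> 'a list \<Rightarrow> 'a) \<Rightarrow> bool" where
  "countable_approx_substructure d arP P arF f N arR R arG F \<longleftrightarrow>
     classical_structure N arR R arG F \<and> countable N \<and>
     (\<forall>x. \<forall>\<epsilon>>0. \<exists>y\<in>N. d x y < \<epsilon>) \<and>
     (\<forall>h\<in>AutN N arR R arG F. \<exists>!g. g \<in> AutM d arP P arF f \<and> (\<forall>x\<in>N. g x = h x)) \<and>
     (tauM d arP P arF f) closure_of
        (ext_aut (AutM d arP P arF f) N ` AutN N arR R arG F) = AutM d arP P arF f"

definition good_approx_substructure ::
  "('a \<Rightarrow> 'a \<Rightarrow> real) \<Rightarrow> ('i \<Rightarrow> nat) \<Rightarrow> ('i \<Rightarrow> 'a list \<Rightarrow> real)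
    \<Rightarrow> ('j \<Rightarrow> nat) \<Rightarrow> ('j \<Rightarrow> 'a list \<Rightarrow> 'a)
    \<Rightarrow> 'a set \<Rightarrow> ('r \<Rightarrow> nat) \<Rightarrow> ('r \<Rightarrow> 'a list \<Rightarrow> bool)
    \<Rightarrow> ('k \<Rightarrow> nat) \<Rightarrow> ('k \<Rightarrow> 'a list \<Rightarrow> 'a) \<Rightarrow> bool" where
  "good_approx_substructure d arP P arF f N arR R arG F \<longleftrightarrow>
     countable_approx_substructure d arP P arF f N arR R arG F \<and>
     (\<forall>U \<epsilon>. openin (tauN N arR R arG F) U \<longrightarrow> \<epsilon> > 0 \<longrightarrow>
        openin (tauM d arP P arF f)
          {y \<in> AutM d arP P arF f.
             \<exists>u\<in>ext_aut (AutM d arP P arF f) N ` U. unif_dist d y u < \<epsilon>})"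

text \<open>Diagonal conjugacy classes.  In Aut(N) (maps extensional outside N) conjugation is
  k \<circ> g \<circ> k^{-1} restricted to N; in Aut(M) it is k \<circ> g \<circ> k^{-1} on the whole type.\<close>

definition diag_conj_classN :: "('a \<Rightarrow> 'a) set \<Rightarrow> 'a set \<Rightarrow> nat \<Rightarrow> (nat \<Rightarrow> 'a \<Rightarrow> 'a)
    \<Rightarrow> (nat \<Rightarrow> 'a \<Rightarrow> 'a) set" where
  "diag_conj_classN K N n gs =
     {(\<lambda>i\<in>{..<n}. restrict (k \<circ> gs i \<circ> inv_into N k) N) | k. k \<in> K}"

definition diag_conj_classM :: "('a \<Rightarrow> 'a) set \<Rightarrow> nat \<Rightarrow> (nat \<Rightarrow> 'a \<Rightarrow> 'a)
    \<Rightarrow> (nat \<Rightarrow> 'a \<Rightarrow> 'a) set" where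
  "diag_conj_classM K n gs = {(\<lambda>i\<in>{..<n}. k \<circ> gs i \<circ> inv k) | k. k \<in> K}"

definition ample_generics_AutN :: "'a set \<Rightarrow> ('a \<Rightarrow> 'a) set \<Rightarrow> ('a \<Rightarrow> 'a) topology \<Rightarrow> bool" where
  "ample_generics_AutN N K T \<longleftrightarrow>
     (\<forall>n. \<exists>gs \<in> PiE {..<n} (\<lambda>_. K). comeagre_in (power_top T n) (diag_conj_classN K N n gs))"

definition topometric_ample_generics_AutM ::
  "('a \<Rightarrow> 'a \<Rightarrow> real) \<Rightarrow> ('a \<Rightarrow> 'a) set \<Rightarrow> ('a \<Rightarrow> 'a) topology \<Rightarrow> bool" where
  "topometric_ample_generics_AutM d G T \<longleftrightarrow>
     (\<forall>n. \<forall>\<epsilon>>0. \<exists>gs \<in> PiE {..<n} (\<lambda>_. G).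
        comeagre_in (power_top T n) (tuple_nbhd d G n (diag_conj_classM G n gs) \<epsilon>))"

end

theory Submission
  imports Defs
begin

(*
  Write A \<supseteq> \<Inter>m O_m with O_m dense open in Aut(N)^n and fix \<epsilon> > 0.  The basic open sets of
  Aut(N)^n are cylinders (tuples prescribed on a finite subset of N), and goodness of N says
  that the \<epsilon>-fattening of the extension of a cylinder is \<tau>-open in Aut(M)^n.  Grow a tree of
  cylinders in which a node of depth m lies in O_m and prescribes the m-th point of N both as an
  argument and as a value.  If g is \<epsilon>-close to (the extension of) u and v agrees with u on a large
  finite set, then g ext(u)^-1 ext(v) is \<tau>-close to g and \<epsilon>-close to ext(v), because the uniform
  distance is right invariant; choosing v in O_m shows that every open set inside the fattening
  of a node meets the fattening of a child.  By a Banach-Mazur type argument, comeagre many g lie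
  in the fattenings along a whole branch; the cylinders of a branch shrink to a tuple a of
  automorphisms of N in every O_m, hence in A, and g is within \<epsilon> of ext(a).  Intersecting over
  \<epsilon> = 1/(k+1) gives the first claim; applied to a comeagre diagonal conjugacy class of Aut(N),
  whose extension lies in a conjugacy class of Aut(M), it gives ample generics.
*)

lemma comeagre_in_mono:
  "comeagre_in X S \<Longrightarrow> S \<subseteq> T \<Longrightarrow> T \<subseteq> topspace X \<Longrightarrow> comeagre_in X T"
  unfolding comeagre_in_def meagre_in_def by (meson Diff_mono order_refl order_trans)

lemma nowhere_dense_in_complement:
  assumes "openin X W" "X closure_of W = topspace X"
  shows "nowhere_dense_in X (topspace X - W)"
proof -
  have "X closure_of (topspace X - W) = topspace X - W"
    using assms(1) by (simp add: closure_of_closedin closedin_diff)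
  moreover have "X interior_of (topspace X - W) = {}"
    using assms(2) by (simp add: interior_of_complement)
  ultimately show ?thesis unfolding nowhere_dense_in_def by simp
qed

lemma comeagre_in_Inter_dense_open:
  fixes W :: "nat \<Rightarrow> 'b set"
  assumes "\<And>m. openin X (W m)" "\<And>m. X closure_of W m = topspace X"
  shows "comeagre_in X (topspace X \<inter> (\<Inter>m. W m))"
proof -
  have "meagre_in X (topspace X - (topspace X \<inter> (\<Inter>m. W m)))"
    unfolding meagre_in_def
  proof (intro exI conjI)
    show "countable (range (\<lambda>m. topspace X - W m))" by simp
    show "\<forall>T\<in>range (\<lambda>m. topspace X - W m). nowhere_dense_in X T"
      using assms by (auto intro: nowhere_dense_in_complement)
  qed auto
  then show ?thesis by (simp add: comeagre_in_def)
qed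

lemma comeagre_in_Inter:
  fixes S :: "nat \<Rightarrow> 'b set"
  assumes "\<And>k. comeagre_in X (S k)"
  shows "comeagre_in X (\<Inter>k. S k)"
proof -
  have "\<forall>k. \<exists>\<F>. countable \<F> \<and> (\<forall>T\<in>\<F>. nowhere_dense_in X T) \<and> topspace X - S k \<subseteq> \<Union>\<F>"
    using assms by (simp add: comeagre_in_def meagre_in_def)
  from choice[OF this] obtain \<F> where
    \<F>: "\<forall>k. countable (\<F> k) \<and> (\<forall>T\<in>\<F> k. nowhere_dense_in X T) \<and> topspace X - S k \<subseteq> \<Union>(\<F> k)"
    by blast
  have "meagre_in X (topspace X - (\<Inter>k. S k))"
    unfolding meagre_in_def
  proof (intro exI conjI)
    show "countable (\<Union>k. \<F> k)" using \<F> by (intro countable_UN) auto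
    show "\<forall>T\<in>\<Union>k. \<F> k. nowhere_dense_in X T" using \<F> by blast
    show "topspace X - (\<Inter>k. S k) \<subseteq> \<Union>(\<Union>k. \<F> k)" using \<F> by (auto 4 3)
  qed
  moreover have "(\<Inter>k. S k) \<subseteq> topspace X"
    using assms[of 0] by (auto simp: comeagre_in_def)
  ultimately show ?thesis by (simp add: comeagre_in_def)
qed

lemma comeagre_in_obtains_dense_opens:
  assumes "comeagre_in X A"
  obtains W :: "nat \<Rightarrow> 'b set"
  where "\<And>m. openin X (W m)" "\<And>m. X closure_of W m = topspace X" "topspace X \<inter> (\<Inter>m. W m) \<subseteq> A"
proof -
  obtain \<F> where \<F>: "countable \<F>" "\<forall>T\<in>\<F>. nowhere_dense_in X T" "topspace X - A \<subseteq> \<Union>\<F>"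
    using assms unfolding comeagre_in_def meagre_in_def by blast
  define T where "T = from_nat_into (insert {} \<F>)"
  have range_T: "range T = insert {} \<F>" using \<F>(1) by (simp add: T_def)
  have T: "nowhere_dense_in X (T m)" for m
  proof -
    have "T m \<in> insert {} \<F>" using range_T by blast
    then consider "T m = {}" | "T m \<in> \<F>" by blast
    then show ?thesis using \<F>(2) by cases (simp_all add: nowhere_dense_in_def)
  qed
  show ?thesis
  proof
    show "openin X (topspace X - X closure_of T m)" for m
      by (simp add: openin_diff)
    show "X closure_of (topspace X - X closure_of T m) = topspace X" for m
      using T[of m] by (simp add: nowhere_dense_in_def closure_of_complement)
    show "topspace X \<inter> (\<Inter>m. topspace X - X closure_of T m) \<subseteq> A"
    proof
      fix x assume x: "x \<in> topspace X \<inter> (\<Inter>m. topspace X - X closure_of T m)"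
      show "x \<in> A"
      proof (rule ccontr)
        assume "x \<notin> A"
        then obtain F where "F \<in> \<F>" "x \<in> F" using x \<F>(3) by blast
        moreover obtain m where "F = T m" using range_T \<open>F \<in> \<F>\<close> by (metis insertCI rangeE)
        ultimately have "x \<in> T m" by simp
        then have "x \<in> X closure_of T m" using x closure_of_subset_Int by fastforce
        then show False using x by blast
      qed
    qed
  qed
qed

section \<open>Branches of a refining tree of open sets\<close>

lemma maximal_disjoint_subfamily:
  fixes A :: "'c \<Rightarrow> 'b set"
  shows "\<exists>S\<subseteq>C. disjoint_family_on A S \<and> (\<forall>p\<in>C. (\<forall>q\<in>S. A p \<inter> A q = {}) \<longrightarrow> p \<in> S)"
proof -
  let ?D = "{S. S \<subseteq> C \<and> disjoint_family_on A S}"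
  have "\<forall>\<C>\<in>chains ?D. \<Union>\<C> \<in> ?D"
  proof
    fix \<C> assume \<C>: "\<C> \<in> chains ?D"
    have "disjoint_family_on A (\<Union>\<C>)"
      unfolding disjoint_family_on_def
    proof (intro ballI impI)
      fix p q assume "p \<in> \<Union>\<C>" "q \<in> \<Union>\<C>" "p \<noteq> q"
      then obtain S S' where "S \<in> \<C>" "S' \<in> \<C>" "p \<in> S" "q \<in> S'" by auto
      moreover from this have "S \<subseteq> S' \<or> S' \<subseteq> S" using chainsD[OF \<C>] by blast
      ultimately show "A p \<inter> A q = {}"
        using chainsD2[OF \<C>] \<open>p \<noteq> q\<close> unfolding disjoint_family_on_def by blast
    qed
    then show "\<Union>\<C> \<in> ?D" using chainsD2[OF \<C>] by auto
  qed
  from Zorn_Lemma[OF this] obtain S where S: "S \<in> ?D" and max: "\<forall>S'\<in>?D. S \<subseteq> S' \<longrightarrow> S' = S"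
    by blast
  have "p \<in> S" if "p \<in> C" "\<forall>q\<in>S. A p \<inter> A q = {}" for p
  proof -
    have "insert p S \<in> ?D"
      using S that unfolding disjoint_family_on_def by (auto simp: Int_commute)
    then show ?thesis using max by blast
  qed
  then show ?thesis using S by blast
qed

locale refining_tree =
  fixes X :: "'b topology" and Q :: "'n \<Rightarrow> 'b set" and is_node :: "'n \<Rightarrow> bool"
    and child :: "nat \<Rightarrow> 'n \<Rightarrow> 'n \<Rightarrow> bool" and root :: 'n
  assumes openin_Q: "\<And>s. is_node s \<Longrightarrow> openin X (Q s)"
    and is_node_root: "is_node root"
    and dense_Q_root: "X closure_of Q root = topspace X"
    and is_node_child: "\<And>m s t. child m s t \<Longrightarrow> is_node t"
    and child_meets: "\<And>m s V. is_node s \<Longrightarrow> openin X V \<Longrightarrow> V \<noteq> {} \<Longrightarrow> V \<subseteq> Q s \<Longrightarrow>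
                        \<exists>t. child m s t \<and> V \<inter> Q t \<noteq> {}"
begin

text \<open>Each level is a maximal disjoint family of open sets refining the previous
  level, so a point lying in every level determines a unique branch.\<close>

definition candidates :: "nat \<Rightarrow> 'n \<Rightarrow> 'b set \<Rightarrow> ('n \<times> 'b set) set" where
  "candidates m s Z = {(t, Z'). child m s t \<and> openin X Z' \<and> Z' \<subseteq> Z \<inter> Q t}"

definition refinement :: "nat \<Rightarrow> 'n \<Rightarrow> 'b set \<Rightarrow> ('n \<times> 'b set) set" where
  "refinement m s Z = (SOME S. S \<subseteq> candidates m s Z \<and> disjoint_family_on snd S \<and>
     (\<forall>p\<in>candidates m s Z. (\<forall>q\<in>S. snd p \<inter> snd q = {}) \<longrightarrow> p \<in> S))"

lemma refinement:
  shows refinement_subset: "refinement m s Z \<subseteq> candidates m s Z"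
    and disjoint_refinement: "disjoint_family_on snd (refinement m s Z)"
    and refinement_maximal: "\<lbrakk>p \<in> candidates m s Z; \<forall>q\<in>refinement m s Z. snd p \<inter> snd q = {}\<rbrakk>
                               \<Longrightarrow> p \<in> refinement m s Z"
  using someI_ex[OF maximal_disjoint_subfamily[of "candidates m s Z" snd]]
  unfolding refinement_def by blast+

primrec level :: "nat \<Rightarrow> ('n \<times> 'b set) set" where
  "level 0 = {(root, Q root)}"
| "level (Suc m) = (\<Union>(s, Z)\<in>level m. refinement m s Z)"

lemma level_SucE:
  assumes "(t, Z') \<in> level (Suc m)"
  obtains s Z where "(s, Z) \<in> level m" "(t, Z') \<in> refinement m s Z"
    "child m s t" "openin X Z'" "Z' \<subseteq> Z \<inter> Q t"
  using assms refinement_subset by (fastforce simp: candidates_def)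

lemma level_node:
  assumes "(s, Z) \<in> level m"
  shows "is_node s \<and> openin X Z \<and> Z \<subseteq> Q s"
proof (cases m)
  case 0
  then show ?thesis using assms by (simp add: is_node_root openin_Q)
next
  case (Suc m')
  show ?thesis using assms unfolding Suc by (rule level_SucE) (auto dest: is_node_child)
qed

lemma disjoint_level: "disjoint_family_on snd (level m)"
proof (induction m)
  case 0
  then show ?case by (simp add: disjoint_family_on_def)
next
  case (Suc m)
  show ?case
    unfolding disjoint_family_on_def
  proof (intro ballI impI)
    fix p q assume p: "p \<in> level (Suc m)" and q: "q \<in> level (Suc m)" and "p \<noteq> q"
    obtain t Z' t' Z'' where pq: "p = (t, Z')" "q = (t', Z'')" by fastforce
    obtain s Z where s: "(s, Z) \<in> level m" "p \<in> refinement m s Z" "Z' \<subseteq> Z"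
      using p level_SucE unfolding pq by (metis le_infE)
    obtain s' Z''' where s': "(s', Z''') \<in> level m" "q \<in> refinement m s' Z'''" "Z'' \<subseteq> Z'''"
      using q level_SucE unfolding pq by (metis le_infE)
    show "snd p \<inter> snd q = {}"
    proof (cases "(s, Z) = (s', Z''')")
      case True
      then show ?thesis
        using disjoint_refinement[of m s Z] s s' \<open>p \<noteq> q\<close> by (simp add: disjoint_family_on_def)
    next
      case False
      then have "Z \<inter> Z''' = {}"
        using Suc.IH s(1) s'(1) unfolding disjoint_family_on_def by fastforce
      then show ?thesis using s(3) s'(3) pq by auto
    qed
  qed
qed

lemma level_meets:
  assumes "openin X V" "V \<noteq> {}"
  shows "\<exists>(s, Z)\<in>level m. V \<inter> Z \<noteq> {}"
proof (induction m)
  case 0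
  then show ?case using assms dense_Q_root by (auto simp: dense_intersects_open)
next
  case (Suc m)
  then obtain s Z where sZ: "(s, Z) \<in> level m" "V \<inter> Z \<noteq> {}" by blast
  have node: "is_node s" "openin X Z" "Z \<subseteq> Q s" using level_node[OF sZ(1)] by auto
  have VZ: "openin X (V \<inter> Z)" using assms(1) node(2) by blast
  obtain t where t: "child m s t" "V \<inter> Z \<inter> Q t \<noteq> {}"
    using child_meets[OF node(1) VZ sZ(2)] node(3) by blast
  have cand: "(t, V \<inter> Z \<inter> Q t) \<in> candidates m s Z"
    using t(1) VZ openin_Q[OF is_node_child[OF t(1)]] by (auto simp: candidates_def)
  \<comment> \<open>By maximality of the refinement, the candidate is in it or meets one of its members.\<close>
  have "\<exists>q\<in>refinement m s Z. V \<inter> snd q \<noteq> {}"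
  proof (cases "\<forall>q\<in>refinement m s Z. snd (t, V \<inter> Z \<inter> Q t) \<inter> snd q = {}")
    case True
    then show ?thesis using refinement_maximal[OF cand] t(2) by fastforce
  next
    case False
    then show ?thesis by auto
  qed
  then show ?case using sZ(1) by fastforce
qed

definition level_union :: "nat \<Rightarrow> 'b set" where
  "level_union m = \<Union>(snd ` level m)"

lemma openin_level_union: "openin X (level_union m)"
  unfolding level_union_def by (rule openin_Union) (use level_node in auto)

lemma dense_level_union: "X closure_of level_union m = topspace X"
  unfolding dense_intersects_open level_union_def using level_meets by fastforce

lemma branch_through_levels:
  assumes "g \<in> (\<Inter>m. level_union m)"
  shows "\<exists>b. b 0 = root \<and> (\<forall>m. child m (b m) (b (Suc m)) \<and> g \<in> Q (b m))"
proof -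
  have "\<exists>p. p \<in> level m \<and> g \<in> snd p" for m using assms unfolding level_union_def by blast
  then obtain p where p: "\<And>m. p m \<in> level m \<and> g \<in> snd (p m)" by metis
  have unique: "q = p m" if "q \<in> level m" "g \<in> snd q" for q m
    using disjoint_level[of m] p[of m] that unfolding disjoint_family_on_def by blast
  have "child m (fst (p m)) (fst (p (Suc m)))" for m
  proof -
    obtain t Z' where tZ': "p (Suc m) = (t, Z')" by fastforce
    then obtain s Z where "(s, Z) \<in> level m" "child m s t" "Z' \<subseteq> Z"
      using p[of "Suc m"] level_SucE by (metis le_infE)
    moreover have "(s, Z) = p m" using unique calculation p[of "Suc m"] tZ' by auto
    ultimately show ?thesis using tZ' by (metis fst_conv)
  qed
  moreover have "g \<in> Q (fst (p m))" for m
    using p[of m] level_node[of "fst (p m)" "snd (p m)" m] by auto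
  moreover have "fst (p 0) = root" using p[of 0] by simp
  ultimately show ?thesis by (intro exI[of _ "\<lambda>m. fst (p m)"]) simp
qed

theorem comeagre_in_branch_points:
  "comeagre_in X {g \<in> topspace X. \<exists>b. b 0 = root \<and> (\<forall>m. child m (b m) (b (Suc m)) \<and> g \<in> Q (b m))}"
    (is "comeagre_in X ?B")
proof (rule comeagre_in_mono[OF comeagre_in_Inter_dense_open[OF openin_level_union dense_level_union]])
  show "topspace X \<inter> (\<Inter>m. level_union m) \<subseteq> ?B"
  proof
    fix g assume "g \<in> topspace X \<inter> (\<Inter>m. level_union m)"
    then show "g \<in> ?B" using branch_through_levels[of g] by (simp only: mem_Collect_eq Int_iff)
  qed
qed (rule Collect_restrict)

end

lemma AutM_comp:
  assumes "g \<in> AutM d arP P arF f" "h \<in> AutM d arP P arF f"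
  shows "g \<circ> h \<in> AutM d arP P arF f"
  using assms by (auto simp: AutM_def intro: bij_comp simp flip: map_map)

lemma AutM_inv:
  assumes g: "g \<in> AutM d arP P arF f"
  shows "inv g \<in> AutM d arP P arF f"
proof -
  have "bij g" and iso: "\<And>x y. d (g x) (g y) = d x y"
    and pres_P: "\<And>i xs. length xs = arP i \<Longrightarrow> P i (map g xs) = P i xs"
    and pres_f: "\<And>j xs. length xs = arF j \<Longrightarrow> g (f j xs) = f j (map g xs)"
    using g by (auto simp: AutM_def)
  then have g_inv: "g (inv g x) = x" for x by (simp add: bij_is_surj surj_f_inv_f)
  then have map_g_inv: "map g (map (inv g) xs) = xs" for xs by (simp add: map_idI)
  have "d (inv g x) (inv g y) = d x y" for x y
    using iso[of "inv g x" "inv g y"] by (simp add: g_inv)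
  moreover have "P i (map (inv g) xs) = P i xs" if "length xs = arP i" for i xs
    using pres_P[of "map (inv g) xs" i] that unfolding map_g_inv by simp
  moreover have "inv g (f j xs) = f j (map (inv g) xs)" if "length xs = arF j" for j xs
  proof -
    have "g (f j (map (inv g) xs)) = f j xs"
      using pres_f[of "map (inv g) xs" j] that unfolding map_g_inv by simp
    then show ?thesis using inv_f_f[OF bij_is_inj[OF \<open>bij g\<close>]] by metis
  qed
  ultimately show ?thesis using \<open>bij g\<close> by (simp add: AutM_def bij_imp_bij_inv)
qed

lemma unif_dist_comp_surj: "surj c \<Longrightarrow> unif_dist d (g \<circ> c) (h \<circ> c) = unif_dist d g h"
proof -
  assume "surj c"
  have "(\<lambda>x. d ((g \<circ> c) x) ((h \<circ> c) x)) ` UNIV = (\<lambda>y. d (g y) (h y)) ` range c"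
    by (simp add: image_image)
  then show ?thesis using \<open>surj c\<close> by (simp add: unif_dist_def)
qed

lemma unif_dist_upper: "(\<And>x y. d x y \<le> B) \<Longrightarrow> d (g x) (h x) \<le> unif_dist d g h"
  unfolding unif_dist_def by (rule cSUP_upper) (auto intro!: bdd_aboveI2)

lemma unif_dist_least: "(\<And>x. d (g x) (h x) \<le> c) \<Longrightarrow> unif_dist d g h \<le> c"
  unfolding unif_dist_def by (rule cSUP_least) auto

lemma tuple_dist_less_iff:
  assumes "\<epsilon> > 0"
  shows "tuple_dist d n gs hs < \<epsilon> \<longleftrightarrow> (\<forall>i<n. unif_dist d (gs i) (hs i) < \<epsilon>)"
proof -
  have "tuple_dist d n gs hs = Max (insert 0 ((\<lambda>i. unif_dist d (gs i) (hs i)) ` {..<n}))"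
    unfolding tuple_dist_def by (simp add: cSup_eq_Max)
  then show ?thesis using assms by auto
qed

lemma tuple_dist_least:
  "c \<ge> 0 \<Longrightarrow> (\<And>i. i < n \<Longrightarrow> unif_dist d (gs i) (hs i) \<le> c) \<Longrightarrow> tuple_dist d n gs hs \<le> c"
  unfolding tuple_dist_def by (intro cSup_least) auto

lemma topspace_power_top [simp]: "topspace (power_top X n) = PiE {..<n} (\<lambda>_. topspace X)"
  by (simp add: power_top_def)

lemma openin_power_top_nbhd:
  assumes "openin (power_top X n) V" "w \<in> V"
  obtains U where "\<And>i. i < n \<Longrightarrow> openin X (U i) \<and> w i \<in> U i" "PiE {..<n} U \<subseteq> V"
proof -
  have "\<forall>w\<in>V. \<exists>U. finite {i \<in> {..<n}. U i \<noteq> topspace X} \<and> (\<forall>i\<in>{..<n}. openin X (U i)) \<and>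
          w \<in> PiE {..<n} U \<and> PiE {..<n} U \<subseteq> V"
    using assms(1) unfolding power_top_def openin_product_topology_alt .
  then obtain U where U: "\<forall>i\<in>{..<n}. openin X (U i)" "w \<in> PiE {..<n} U" "PiE {..<n} U \<subseteq> V"
    using assms(2) by blast
  show ?thesis
  proof (rule that)
    show "openin X (U i) \<and> w i \<in> U i" if "i < n" for i
      using U(1,2) that by (simp add: PiE_iff)
  qed (rule U(3))
qed

lemma AutN_pointwise_limit:
  assumes N: "classical_structure N arR R arG F"
    and c: "\<And>m. c m \<in> AutN N arR R arG F" and a: "a \<in> extensional N" "N \<subseteq> a ` N"
    and lim: "\<And>x. x \<in> N \<Longrightarrow> eventually (\<lambda>m. c m x = a x) sequentially"
  shows "a \<in> AutN N arR R arG F"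
proof -
  have agree: "\<exists>m. \<forall>x\<in>S. c m x = a x" if "finite S" "S \<subseteq> N" for S
  proof -
    have "eventually (\<lambda>m. \<forall>x\<in>S. c m x = a x) sequentially"
      using that by (intro eventually_ball_finite) (auto intro: lim)
    then show ?thesis by (auto simp: eventually_sequentially)
  qed
  have c_aut: "bij_betw (c m) N N"
    "\<And>r xs. set xs \<subseteq> N \<Longrightarrow> length xs = arR r \<Longrightarrow> R r (map (c m) xs) \<longleftrightarrow> R r xs"
    "\<And>k xs. set xs \<subseteq> N \<Longrightarrow> length xs = arG k \<Longrightarrow> c m (F k xs) = F k (map (c m) xs)" for m
    using c[of m] by (auto simp: AutN_def)
  have "a x \<in> N" if "x \<in> N" for x
    using agree[of "{x}"] that c_aut(1)
    by (metis bij_betwE empty_subsetI finite.intros insert_subset singletonI)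
  moreover have "inj_on a N"
  proof (rule inj_onI)
    fix x y assume "x \<in> N" "y \<in> N" "a x = a y"
    moreover obtain m where "c m x = a x" "c m y = a y" using agree[of "{x, y}"] calculation by auto
    ultimately show "x = y" using c_aut(1)[of m] by (metis bij_betw_def inj_onD)
  qed
  ultimately have "bij_betw a N N" using a(2) by (auto simp: bij_betw_def)
  moreover have "R r (map a xs) \<longleftrightarrow> R r xs" if xs: "set xs \<subseteq> N" "length xs = arR r" for r xs
  proof -
    obtain m where "\<forall>x\<in>set xs. c m x = a x" using agree[of "set xs"] xs by auto
    then show ?thesis using c_aut(2)[OF xs, of m] by (metis map_cong)
  qed
  moreover have "a (F k xs) = F k (map a xs)" if xs: "set xs \<subseteq> N" "length xs = arG k" for k xs
  proof -
    have "F k xs \<in> N" using N xs unfolding classical_structure_def by blast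
    then obtain m where "\<forall>x\<in>insert (F k xs) (set xs). c m x = a x"
      using agree[of "insert (F k xs) (set xs)"] xs by auto
    then show ?thesis using c_aut(3)[OF xs, of m] by (metis insert_iff map_cong)
  qed
  ultimately show ?thesis using a(1) by (simp add: AutN_def)
qed

lemma unif_dist_right_translate:
  assumes "bij a" "surj b"
  shows "unif_dist d (g \<circ> inv a \<circ> b) b = unif_dist d g a"
proof -
  have "a \<circ> inv a = id" using assms(1) by (meson bij_is_surj surj_iff)
  then have "unif_dist d (g \<circ> inv a \<circ> b) b = unif_dist d ((g \<circ> inv a) \<circ> b) ((a \<circ> inv a) \<circ> b)"
    by simp
  also have "\<dots> = unif_dist d (g \<circ> inv a) (a \<circ> inv a)"
    using assms(2) by (rule unif_dist_comp_surj)
  also have "\<dots> = unif_dist d g a"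
    using assms(1) by (simp add: bij_imp_bij_inv bij_is_surj unif_dist_comp_surj)
  finally show ?thesis .
qed

lemma tuple_dclosure_subset_tuple_nbhd:
  assumes "B \<subseteq> C" "\<epsilon> > 0"
  shows "tuple_dclosure d G n B \<subseteq> tuple_nbhd d G n C \<epsilon>"
  using assms unfolding tuple_dclosure_def tuple_nbhd_def by blast

locale good_approximation =
  fixes d :: "'a \<Rightarrow> 'a \<Rightarrow> real"
    and arP :: "'i \<Rightarrow> nat" and P :: "'i \<Rightarrow> 'a list \<Rightarrow> real"
    and arF :: "'j \<Rightarrow> nat" and f :: "'j \<Rightarrow> 'a list \<Rightarrow> 'a"
    and N :: "'a set"
    and arR :: "'r \<Rightarrow> nat" and R :: "'r \<Rightarrow> 'a list \<Rightarrow> bool"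
    and arG :: "'k \<Rightarrow> nat" and F :: "'k \<Rightarrow> 'a list \<Rightarrow> 'a"
  assumes polish: "polish_metric_structure d arP P arF f"
    and good: "good_approx_substructure d arP P arF f N arR R arG F"
begin

abbreviation "G \<equiv> AutM d arP P arF f"
abbreviation "H \<equiv> AutN N arR R arG F"
abbreviation "TG \<equiv> tauM d arP P arF f"
abbreviation "TH \<equiv> tauN N arR R arG F"
abbreviation "extend \<equiv> ext_aut G N"
abbreviation "extend_tuple n hs \<equiv> \<lambda>i\<in>{..<n}. extend (hs i)"

sublocale M: Metric_space UNIV d
  using polish by (simp add: polish_metric_structure_def metric_structure_def)

lemma d_bounded: obtains B where "\<And>x y. d x y \<le> B"
  using polish unfolding polish_metric_structure_def metric_structure_def by blast

lemma approx: "countable_approx_substructure d arP P arF f N arR R arG F"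
  using good by (simp add: good_approx_substructure_def)

lemma openin_extend_nbhd:
  "openin TH U \<Longrightarrow> \<epsilon> > 0 \<Longrightarrow> openin TG {y \<in> G. \<exists>u\<in>extend ` U. unif_dist d y u < \<epsilon>}"
  using good by (simp add: good_approx_substructure_def)

lemma classical: "classical_structure N arR R arG F"
  and countable_N: "countable N"
  and dense_N: "\<And>x \<epsilon>. \<epsilon> > 0 \<Longrightarrow> \<exists>y\<in>N. d x y < \<epsilon>"
  and extension_unique: "\<And>h. h \<in> H \<Longrightarrow> \<exists>!g. g \<in> G \<and> (\<forall>x\<in>N. g x = h x)"
  and closure_extend: "TG closure_of (extend ` H) = G"
  using approx by (simp_all add: countable_approx_substructure_def)

lemma N_nonempty: "N \<noteq> {}"
  using dense_N[of 1] by auto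

lemma extend:
  assumes "h \<in> H"
  shows extend_in: "extend h \<in> G" and extend_agrees: "\<And>x. x \<in> N \<Longrightarrow> extend h x = h x"
  using theI'[OF extension_unique[OF assms]] unfolding ext_aut_def by auto

lemma extend_unique: "h \<in> H \<Longrightarrow> g \<in> G \<Longrightarrow> (\<And>x. x \<in> N \<Longrightarrow> g x = h x) \<Longrightarrow> extend h = g"
  unfolding ext_aut_def by (rule the1_equality[OF extension_unique]) auto

lemma AutM_bij: "g \<in> G \<Longrightarrow> bij g"
  and AutM_isometry: "g \<in> G \<Longrightarrow> d (g x) (g y) = d x y"
  by (auto simp: AutM_def)

lemma AutN_extensional: "h \<in> H \<Longrightarrow> h \<in> extensional N"
  and AutN_bij_betw: "h \<in> H \<Longrightarrow> bij_betw h N N"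
  by (auto simp: AutN_def)

lemma AutN_maps: "h \<in> H \<Longrightarrow> x \<in> N \<Longrightarrow> h x \<in> N"
  using AutN_bij_betw bij_betwE by blast

lemma topspace_TG [simp]: "topspace TG = G"
  by (simp add: tauM_def)

lemma topspace_TH [simp]: "topspace TH = H"
proof -
  have "H \<subseteq> (\<Pi>\<^sub>E x\<in>N. N)" using AutN_extensional AutN_maps by (auto simp: PiE_def Pi_def)
  then show ?thesis by (auto simp: tauN_def)
qed

lemma d_le_unif_dist: "d (g x) (h x) \<le> unif_dist d g h"
  using d_bounded unif_dist_upper by metis

lemma TG_nbhd:
  assumes "openin TG U" "w \<in> U"
  obtains K \<delta> where "finite K" "\<delta> > 0" "{h \<in> G. \<forall>x\<in>K. d (h x) (w x) < \<delta>} \<subseteq> U"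
proof -
  obtain T where T: "openin (product_topology (\<lambda>_. M.mtopology) UNIV) T" "U = T \<inter> G"
    using assms(1) unfolding tauM_def openin_subtopology by blast
  then obtain V where V: "finite {x. V x \<noteq> UNIV}" "\<And>x. openin M.mtopology (V x)"
    "w \<in> PiE UNIV V" "PiE UNIV V \<subseteq> T"
    using assms(2) unfolding openin_product_topology_alt by auto
  define K where "K = {x. V x \<noteq> UNIV}"
  have "\<exists>r>0. M.mball (w x) r \<subseteq> V x" for x
    using V(2,3) M.openin_mtopology by (auto simp: PiE_iff)
  then obtain r where r: "\<And>x. r x > 0" "\<And>x. M.mball (w x) (r x) \<subseteq> V x" by metis
  define \<delta> where "\<delta> = Min (insert 1 (r ` K))"
  have "finite K" using V(1) by (simp add: K_def)
  then have "\<delta> > 0" "\<And>x. x \<in> K \<Longrightarrow> \<delta> \<le> r x" using r(1) by (auto simp: \<delta>_def)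
  moreover have "h \<in> U" if "h \<in> G" "\<forall>x\<in>K. d (h x) (w x) < \<delta>" for h
  proof -
    have "h x \<in> V x" for x
    proof (cases "x \<in> K")
      case True
      then show ?thesis using that(2) calculation(2)[OF True] r(2)[of x] by (force simp: M.commute)
    qed (simp add: K_def)
    then show ?thesis using V(4) T(2) that(1) by (auto simp: PiE_iff)
  qed
  ultimately show ?thesis using that \<open>finite K\<close> by blast
qed

lemma openin_TH_basic:
  assumes "finite S" "S \<subseteq> N"
  shows "openin TH {h \<in> H. \<forall>x\<in>S. h x = s x}"
proof -
  define U where "U x = (if x \<in> S then {s x} \<inter> N else N)" for x
  have "finite {x \<in> N. U x \<noteq> topspace (discrete_topology N)}"
    by (rule finite_subset[OF _ assms(1)]) (auto simp: U_def)
  then have "openin (product_topology (\<lambda>_. discrete_topology N) N) (PiE N U)"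
    by (simp add: openin_PiE_gen U_def)
  moreover have "(\<forall>x\<in>S. h x = s x) \<longleftrightarrow> h \<in> PiE N U" if h: "h \<in> H" for h
  proof
    assume "\<forall>x\<in>S. h x = s x"
    then show "h \<in> PiE N U"
      using AutN_extensional[OF h] AutN_maps[OF h] by (auto simp: U_def PiE_iff extensional_def) metis
  next
    assume "h \<in> PiE N U"
    then have "h x \<in> U x" if "x \<in> N" for x using that by (simp add: PiE_iff)
    then show "\<forall>x\<in>S. h x = s x" using assms(2) by (force simp: U_def)
  qed
  then have "{h \<in> H. \<forall>x\<in>S. h x = s x} = PiE N U \<inter> H" by blast
  ultimately show ?thesis unfolding tauN_def openin_subtopology by blast
qed

lemma TH_nbhd:
  assumes "openin TH U" "u \<in> U"
  obtains S where "finite S" "S \<subseteq> N" "{h \<in> H. \<forall>x\<in>S. h x = u x} \<subseteq> U"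
proof -
  obtain T where T: "openin (product_topology (\<lambda>_. discrete_topology N) N) T" "U = T \<inter> H"
    using assms(1) unfolding tauN_def openin_subtopology by blast
  then obtain V where V: "finite {x \<in> N. V x \<noteq> N}" "u \<in> PiE N V" "PiE N V \<subseteq> T"
    using assms(2) unfolding openin_product_topology_alt by auto
  define S where "S = {x \<in> N. V x \<noteq> N}"
  have "h \<in> U" if "h \<in> H" "\<forall>x\<in>S. h x = u x" for h
  proof -
    have "h \<in> PiE N V"
      using that V(2) AutN_extensional[OF that(1)] AutN_maps[OF that(1)] by (auto simp: S_def PiE_iff)
    then show ?thesis using V(3) T(2) that(1) by blast
  qed
  then show ?thesis using V(1) by (intro that[of S]) (auto simp: S_def)
qed

definition cylinder :: "nat \<Rightarrow> 'a set \<Rightarrow> (nat \<Rightarrow> 'a \<Rightarrow> 'a) \<Rightarrow> (nat \<Rightarrow> 'a \<Rightarrow> 'a) set" where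
  "cylinder n S \<sigma> = {v \<in> PiE {..<n} (\<lambda>_. H). \<forall>i<n. \<forall>x\<in>S. v i x = \<sigma> i x}"

lemma cylinder_eq_PiE: "cylinder n S \<sigma> = PiE {..<n} (\<lambda>i. {h \<in> H. \<forall>x\<in>S. h x = \<sigma> i x})"
  by (auto simp: cylinder_def PiE_iff extensional_def)

lemma openin_cylinder:
  "finite S \<Longrightarrow> S \<subseteq> N \<Longrightarrow> openin (power_top TH n) (cylinder n S \<sigma>)"
  unfolding cylinder_eq_PiE power_top_def by (simp add: openin_PiE openin_TH_basic)

lemma cylinder_antimono: "S \<subseteq> S' \<Longrightarrow> cylinder n S' \<sigma> \<subseteq> cylinder n S \<sigma>"
  by (auto simp: cylinder_def)

lemma self_in_cylinder: "u \<in> PiE {..<n} (\<lambda>_. H) \<Longrightarrow> u \<in> cylinder n S u"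
  by (simp add: cylinder_def)

lemma cylinder_nbhd:
  assumes "openin (power_top TH n) V" "u \<in> V"
  obtains S where "finite S" "S \<subseteq> N" "cylinder n S u \<subseteq> V"
proof -
  obtain U where U: "\<And>i. i < n \<Longrightarrow> openin TH (U i) \<and> u i \<in> U i" "PiE {..<n} U \<subseteq> V"
    using openin_power_top_nbhd[OF assms] by blast
  have "\<forall>i\<in>{..<n}. \<exists>S. finite S \<and> S \<subseteq> N \<and> {h \<in> H. \<forall>x\<in>S. h x = u i x} \<subseteq> U i"
  proof
    fix i assume "i \<in> {..<n}"
    then have "openin TH (U i)" "u i \<in> U i" using U(1) by auto
    then obtain S where "finite S" "S \<subseteq> N" "{h \<in> H. \<forall>x\<in>S. h x = u i x} \<subseteq> U i"
      by (rule TH_nbhd)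
    then show "\<exists>S. finite S \<and> S \<subseteq> N \<and> {h \<in> H. \<forall>x\<in>S. h x = u i x} \<subseteq> U i" by blast
  qed
  from bchoice[OF this] obtain S where
    S: "\<forall>i\<in>{..<n}. finite (S i) \<and> S i \<subseteq> N \<and> {h \<in> H. \<forall>x\<in>S i. h x = u i x} \<subseteq> U i"
    by blast
  have "cylinder n (\<Union>i<n. S i) u \<subseteq> PiE {..<n} U"
  proof
    fix v assume v: "v \<in> cylinder n (\<Union>i<n. S i) u"
    have "v i \<in> U i" if "i < n" for i
    proof -
      have "v i \<in> H" "\<forall>x\<in>S i. v i x = u i x" using v that by (auto simp: cylinder_def)
      then show ?thesis using S that by blast
    qed
    moreover have "v \<in> extensional {..<n}" using v by (simp add: cylinder_def PiE_iff)
    ultimately show "v \<in> PiE {..<n} U" by (simp add: PiE_iff)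
  qed
  moreover have "finite (\<Union>i<n. S i)" "(\<Union>i<n. S i) \<subseteq> N" using S by auto
  ultimately show ?thesis using that U(2) by blast
qed

lemma TG_power_nbhd:
  assumes "openin (power_top TG n) V" "w \<in> V"
  obtains K \<delta> where "finite K" "\<delta> > 0"
    "\<And>w'. w' \<in> PiE {..<n} (\<lambda>_. G) \<Longrightarrow> \<forall>i<n. \<forall>x\<in>K. d (w' i x) (w i x) < \<delta> \<Longrightarrow> w' \<in> V"
proof -
  obtain U where U: "\<And>i. i < n \<Longrightarrow> openin TG (U i) \<and> w i \<in> U i" "PiE {..<n} U \<subseteq> V"
    using openin_power_top_nbhd[OF assms] by blast
  have "\<forall>i\<in>{..<n}. \<exists>K. \<exists>\<delta>>0. finite K \<and> {h \<in> G. \<forall>x\<in>K. d (h x) (w i x) < \<delta>} \<subseteq> U i"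
  proof
    fix i assume "i \<in> {..<n}"
    then have "openin TG (U i)" "w i \<in> U i" using U(1) by auto
    then obtain K \<delta> where "finite K" "\<delta> > 0" "{h \<in> G. \<forall>x\<in>K. d (h x) (w i x) < \<delta>} \<subseteq> U i"
      by (rule TG_nbhd)
    then show "\<exists>K. \<exists>\<delta>>0. finite K \<and> {h \<in> G. \<forall>x\<in>K. d (h x) (w i x) < \<delta>} \<subseteq> U i" by blast
  qed
  from bchoice[OF this] obtain K where
    "\<forall>i\<in>{..<n}. \<exists>\<delta>>0. finite (K i) \<and> {h \<in> G. \<forall>x\<in>K i. d (h x) (w i x) < \<delta>} \<subseteq> U i"
    by blast
  from bchoice[OF this] obtain \<delta> where K\<delta>:
    "\<forall>i\<in>{..<n}. \<delta> i > 0 \<and> finite (K i) \<and> {h \<in> G. \<forall>x\<in>K i. d (h x) (w i x) < \<delta> i} \<subseteq> U i"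
    by blast
  define \<delta>' where "\<delta>' = Min (insert 1 (\<delta> ` {..<n}))"
  have "finite (\<Union>i<n. K i)" "\<delta>' > 0" using K\<delta> by (simp_all add: \<delta>'_def)
  moreover have "w' \<in> V"
    if w': "w' \<in> PiE {..<n} (\<lambda>_. G)" "\<forall>i<n. \<forall>x\<in>(\<Union>i<n. K i). d (w' i x) (w i x) < \<delta>'" for w'
  proof -
    have "w' i \<in> U i" if "i < n" for i
    proof -
      have "\<delta>' \<le> \<delta> i" using \<open>i < n\<close> by (simp add: \<delta>'_def)
      then have "\<forall>x\<in>K i. d (w' i x) (w i x) < \<delta> i" using w'(2) \<open>i < n\<close> by fastforce
      moreover have "w' i \<in> G" using w'(1) \<open>i < n\<close> by auto
      ultimately show ?thesis using K\<delta> \<open>i < n\<close> by blast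
    qed
    then have "w' \<in> PiE {..<n} U" using w'(1) by (auto simp: PiE_iff)
    then show ?thesis using U(2) by blast
  qed
  ultimately show ?thesis using that by blast
qed

lemma extend_tuples_eq_PiE: "extend_tuple n ` PiE {..<n} (\<lambda>_. H) = PiE {..<n} (\<lambda>_. extend ` H)"
proof
  show "PiE {..<n} (\<lambda>_. extend ` H) \<subseteq> extend_tuple n ` PiE {..<n} (\<lambda>_. H)"
  proof
    fix y assume "y \<in> PiE {..<n} (\<lambda>_. extend ` H)"
    then have "\<forall>i\<in>{..<n}. \<exists>h\<in>H. y i = extend h" by (auto simp: PiE_iff)
    then obtain h where h: "\<And>i. i < n \<Longrightarrow> h i \<in> H \<and> y i = extend (h i)" by (metis lessThan_iff)
    have "y = extend_tuple n (restrict h {..<n})"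
      using h \<open>y \<in> _\<close> by (auto simp: PiE_iff fun_eq_iff extensional_def)
    moreover have "restrict h {..<n} \<in> PiE {..<n} (\<lambda>_. H)" using h by simp
    ultimately show "y \<in> extend_tuple n ` PiE {..<n} (\<lambda>_. H)" by blast
  qed
qed (auto simp: PiE_iff)

lemma dense_extend_tuples:
  "power_top TG n closure_of (extend_tuple n ` PiE {..<n} (\<lambda>_. H)) = topspace (power_top TG n)"
  unfolding extend_tuples_eq_PiE power_top_def closure_of_product_topology closure_extend by simp

definition translate ::
  "nat \<Rightarrow> (nat \<Rightarrow> 'a \<Rightarrow> 'a) \<Rightarrow> (nat \<Rightarrow> 'a \<Rightarrow> 'a) \<Rightarrow> (nat \<Rightarrow> 'a \<Rightarrow> 'a) \<Rightarrow> (nat \<Rightarrow> 'a \<Rightarrow> 'a)" where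
  "translate n g u v = (\<lambda>i\<in>{..<n}. g i \<circ> inv (extend (u i)) \<circ> extend (v i))"

lemma translate_in:
  "g \<in> PiE {..<n} (\<lambda>_. G) \<Longrightarrow> u \<in> PiE {..<n} (\<lambda>_. H) \<Longrightarrow> v \<in> PiE {..<n} (\<lambda>_. H) \<Longrightarrow>
   translate n g u v \<in> PiE {..<n} (\<lambda>_. G)"
  by (auto simp: translate_def PiE_iff intro!: AutM_comp AutM_inv extend_in)

lemma tuple_dist_translate:
  assumes "u \<in> PiE {..<n} (\<lambda>_. H)" "v \<in> PiE {..<n} (\<lambda>_. H)"
  shows "tuple_dist d n (translate n g u v) (extend_tuple n v) = tuple_dist d n g (extend_tuple n u)"
proof -
  have "unif_dist d (translate n g u v i) (extend_tuple n v i) = unif_dist d (g i) (extend_tuple n u i)"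
    if "i < n" for i
  proof -
    have "bij (extend (u i))" "bij (extend (v i))"
      using assms that by (auto simp: PiE_iff intro!: AutM_bij extend_in)
    then show ?thesis
      using that by (simp add: translate_def bij_is_surj unif_dist_right_translate)
  qed
  then show ?thesis unfolding tuple_dist_def by (metis (no_types, lifting) image_cong lessThan_iff)
qed

lemma dist_translate_le:
  assumes "a \<in> G" "b \<in> G" "g \<in> G" "b y = a y"
  shows "d (g (inv a (b x))) (g x) \<le> 2 * d x y"
proof -
  have "a (inv a z) = z" for z using AutM_bij[OF assms(1)] by (simp add: bij_is_surj surj_f_inv_f)
  then have "d (g (inv a (b x))) (g x) = d (b x) (a x)"
    using AutM_isometry[OF assms(3)] AutM_isometry[OF assms(1), of "inv a (b x)" x] by simp
  also have "\<dots> \<le> d (b x) (b y) + d (a y) (a x)"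
    using M.triangle[of "b x" "b y" "a x"] assms(4) by simp
  also have "\<dots> = 2 * d x y"
    using AutM_isometry[OF assms(2)] AutM_isometry[OF assms(1)] M.commute by simp
  finally show ?thesis .
qed

lemma translate_near:
  assumes "openin (power_top TG n) V" "g \<in> V" "u \<in> PiE {..<n} (\<lambda>_. H)"
  obtains S where "finite S" "S \<subseteq> N" "\<And>v. v \<in> cylinder n S u \<Longrightarrow> translate n g u v \<in> V"
proof -
  obtain K \<delta> where K: "finite K" "\<delta> > 0"
    and KV: "\<And>w'. w' \<in> PiE {..<n} (\<lambda>_. G) \<Longrightarrow> \<forall>i<n. \<forall>x\<in>K. d (w' i x) (g i x) < \<delta> \<Longrightarrow> w' \<in> V"
    using TG_power_nbhd[OF assms(1,2)] by blast
  have "\<forall>x. \<exists>y\<in>N. d x y < \<delta> / 2" using dense_N K(2) half_gt_zero by blast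
  then obtain y where y: "\<And>x. y x \<in> N \<and> d x (y x) < \<delta> / 2" by metis
  have gG: "g \<in> PiE {..<n} (\<lambda>_. G)"
    using openin_subset[OF assms(1)] assms(2) by auto
  have "translate n g u v \<in> V" if v: "v \<in> cylinder n (y ` K) u" for v
  proof (rule KV)
    have vH: "v \<in> PiE {..<n} (\<lambda>_. H)" using v by (simp add: cylinder_def)
    show "translate n g u v \<in> PiE {..<n} (\<lambda>_. G)" using gG assms(3) vH by (rule translate_in)
    show "\<forall>i<n. \<forall>x\<in>K. d (translate n g u v i x) (g i x) < \<delta>"
    proof (intro allI impI ballI)
      fix i x assume "i < n" "x \<in> K"
      have "v i (y x) = u i (y x)" using v \<open>i < n\<close> \<open>x \<in> K\<close> by (auto simp: cylinder_def)
      then have "extend (v i) (y x) = extend (u i) (y x)"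
        using vH assms(3) \<open>i < n\<close> y[of x] by (simp add: PiE_iff extend_agrees)
      then have "d (translate n g u v i x) (g i x) \<le> 2 * d x (y x)"
        using vH assms(3) gG \<open>i < n\<close>
        by (auto simp: translate_def PiE_iff intro!: dist_translate_le extend_in)
      then show "d (translate n g u v i x) (g i x) < \<delta>" using y[of x] by linarith
    qed
  qed
  moreover have "finite (y ` K)" "y ` K \<subseteq> N" using K(1) y by auto
  ultimately show ?thesis using that by blast
qed

lemma tuple_dist_self: "tuple_dist d n x x = 0"
proof -
  have "unif_dist d g g = 0" for g by (simp add: unif_dist_def)
  then have "insert 0 ((\<lambda>i. unif_dist d (x i) (x i)) ` {..<n}) = {0}" by auto
  then show ?thesis unfolding tuple_dist_def by (simp only: cSup_singleton)
qed

lemma fattened_cylinder_eq_PiE: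
  assumes "\<epsilon> > 0"
  shows "tuple_nbhd d G n (extend_tuple n ` cylinder n S \<sigma>) \<epsilon> =
    PiE {..<n} (\<lambda>i. {y \<in> G. \<exists>u\<in>extend ` {h \<in> H. \<forall>x\<in>S. h x = \<sigma> i x}. unif_dist d y u < \<epsilon>})"
    (is "?lhs = PiE {..<n} ?U")
proof
  show "?lhs \<subseteq> PiE {..<n} ?U"
  proof
    fix g assume "g \<in> ?lhs"
    then obtain c where g: "g \<in> PiE {..<n} (\<lambda>_. G)" and c: "c \<in> cylinder n S \<sigma>"
      "tuple_dist d n g (extend_tuple n c) < \<epsilon>"
      unfolding tuple_nbhd_def by blast
    then have "\<forall>i<n. unif_dist d (g i) (extend (c i)) < \<epsilon>"
      using assms by (simp add: tuple_dist_less_iff)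
    then show "g \<in> PiE {..<n} ?U" using g c(1) by (auto simp: PiE_iff cylinder_def)
  qed
  show "PiE {..<n} ?U \<subseteq> ?lhs"
  proof
    fix g assume g: "g \<in> PiE {..<n} ?U"
    then have "\<forall>i\<in>{..<n}. \<exists>h. h \<in> H \<and> (\<forall>x\<in>S. h x = \<sigma> i x) \<and> unif_dist d (g i) (extend h) < \<epsilon>"
      by (auto simp: PiE_iff)
    from bchoice[OF this] obtain c where
      c: "\<forall>i\<in>{..<n}. c i \<in> H \<and> (\<forall>x\<in>S. c i x = \<sigma> i x) \<and> unif_dist d (g i) (extend (c i)) < \<epsilon>"
      by blast
    have "restrict c {..<n} \<in> cylinder n S \<sigma>" using c by (simp add: cylinder_def)
    moreover have "tuple_dist d n g (extend_tuple n (restrict c {..<n})) < \<epsilon>"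
      using c assms by (simp add: tuple_dist_less_iff)
    moreover have "g \<in> PiE {..<n} (\<lambda>_. G)" using g by (auto simp: PiE_iff)
    ultimately show "g \<in> ?lhs" unfolding tuple_nbhd_def by blast
  qed
qed

lemma openin_fattened_cylinder:
  assumes "finite S" "S \<subseteq> N" "\<epsilon> > 0"
  shows "openin (power_top TG n) (tuple_nbhd d G n (extend_tuple n ` cylinder n S \<sigma>) \<epsilon>)"
  unfolding fattened_cylinder_eq_PiE[OF assms(3)] power_top_def
  using openin_extend_nbhd[OF openin_TH_basic[OF assms(1,2)] assms(3)] by (simp add: openin_PiE)

lemma unif_dist_extend_limit:
  assumes g: "g \<in> G" and c: "\<And>m. c m \<in> H" and a: "a \<in> H"
    and lim: "\<And>x. x \<in> N \<Longrightarrow> eventually (\<lambda>m. c m x = a x) sequentially"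
    and near: "\<And>m. unif_dist d g (extend (c m)) < \<epsilon>"
  shows "unif_dist d g (extend a) \<le> \<epsilon>"
proof (rule unif_dist_least)
  fix x
  show "d (g x) (extend a x) \<le> \<epsilon>"
  proof (rule field_le_epsilon)
    fix \<eta> :: real assume "\<eta> > 0"
    then obtain y where y: "y \<in> N" "d x y < \<eta> / 2" using dense_N[of "\<eta> / 2"] by auto
    obtain m where "c m y = a y" using lim[OF y(1)] by (auto simp: eventually_sequentially)
    then have "extend a y = extend (c m) y" using y(1) a c by (simp add: extend_agrees)
    then have "d (g y) (extend a y) < \<epsilon>"
      using d_le_unif_dist[of g y "extend (c m)"] near[of m] by simp
    moreover have
      "d (g x) (extend a x) \<le> d (g x) (g y) + d (g y) (extend a y) + d (extend a y) (extend a x)"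
      using M.triangle[of "g x" "g y" "extend a x"] M.triangle[of "g y" "extend a y" "extend a x"]
      by simp
    moreover have "d (g x) (g y) = d x y" "d (extend a y) (extend a x) = d x y"
      using AutM_isometry[OF g] AutM_isometry[OF extend_in[OF a]] M.commute by auto
    ultimately show "d (g x) (extend a x) \<le> \<epsilon> + \<eta>" using y(2) by linarith
  qed
qed

lemma extend_conj:
  assumes k: "k \<in> H" and g: "g \<in> H" and conj: "restrict (k \<circ> g \<circ> inv_into N k) N \<in> H"
  shows "extend (restrict (k \<circ> g \<circ> inv_into N k) N) = extend k \<circ> extend g \<circ> inv (extend k)"
proof (rule extend_unique[OF conj])
  show "extend k \<circ> extend g \<circ> inv (extend k) \<in> G"
    using k g by (intro AutM_comp AutM_inv extend_in)
  fix x assume x: "x \<in> N"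
  then have x_img: "x \<in> k ` N" using AutN_bij_betw[OF k] by (simp add: bij_betw_def)
  then have y: "inv_into N k x \<in> N" by (rule inv_into_into)
  have "extend k (inv_into N k x) = x" using extend_agrees[OF k y] f_inv_into_f[OF x_img] by simp
  then have "inv (extend k) x = inv_into N k x"
    using AutM_bij[OF extend_in[OF k]] by (metis bij_is_inj inv_f_f)
  then show "(extend k \<circ> extend g \<circ> inv (extend k)) x = restrict (k \<circ> g \<circ> inv_into N k) N x"
    using x y extend_agrees[OF g y] extend_agrees[OF k AutN_maps[OF g y]] by simp
qed

section \<open>A refining tree of fattened cylinders\<close>

text \<open>Prescribing the m-th point of N as an argument and as a value at depth m makes the
  limit of a branch a bijection of N.\<close>

definition admissible ::
  "nat \<Rightarrow> (nat \<Rightarrow> (nat \<Rightarrow> 'a \<Rightarrow> 'a) set) \<Rightarrow> nat \<Rightarrow> 'a set \<times> (nat \<Rightarrow> 'a \<Rightarrow> 'a) \<Rightarrow> bool" where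
  "admissible n Op m = (\<lambda>(S, \<sigma>). finite S \<and> S \<subseteq> N \<and> cylinder n S \<sigma> \<subseteq> Op m \<and>
     from_nat_into N m \<in> S \<and> (\<forall>i<n. from_nat_into N m \<in> \<sigma> i ` S))"

definition refines ::
  "nat \<Rightarrow> (nat \<Rightarrow> (nat \<Rightarrow> 'a \<Rightarrow> 'a) set) \<Rightarrow> nat \<Rightarrow> 'a set \<times> (nat \<Rightarrow> 'a \<Rightarrow> 'a) \<Rightarrow>
    'a set \<times> (nat \<Rightarrow> 'a \<Rightarrow> 'a) \<Rightarrow> bool" where
  "refines n Op m = (\<lambda>(S, \<sigma>) (S', \<sigma>'). admissible n Op m (S', \<sigma>') \<and> cylinder n S' \<sigma>' \<subseteq> cylinder n S \<sigma>)"

definition fattened_cylinder :: "nat \<Rightarrow> real \<Rightarrow> 'a set \<times> (nat \<Rightarrow> 'a \<Rightarrow> 'a) \<Rightarrow> (nat \<Rightarrow> 'a \<Rightarrow> 'a) set" where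
  "fattened_cylinder n \<epsilon> = (\<lambda>(S, \<sigma>). tuple_nbhd d G n (extend_tuple n ` cylinder n S \<sigma>) \<epsilon>)"

lemma admissible_cylinder_inside:
  assumes "openin (power_top TH n) B" "openin (power_top TH n) (Op m)" "u \<in> B \<inter> Op m"
  obtains S where "admissible n Op m (S, u)" "cylinder n S u \<subseteq> B"
proof -
  obtain S0 where S0: "finite S0" "S0 \<subseteq> N" "cylinder n S0 u \<subseteq> B \<inter> Op m"
    using cylinder_nbhd[OF openin_Int[OF assms(1,2)] assms(3)] by blast
  define z where "z = from_nat_into N m"
  have z: "z \<in> N" using N_nonempty by (simp add: z_def from_nat_into)
  have u: "bij_betw (u i) N N" if "i < n" for i
    using assms(3) openin_subset[OF assms(1)] that by (auto simp: PiE_iff intro: AutN_bij_betw)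
  define S where "S = insert z (S0 \<union> (\<lambda>i. inv_into N (u i) z) ` {..<n})"
  have inv_N: "inv_into N (u i) z \<in> N" and inv_z: "u i (inv_into N (u i) z) = z" if "i < n" for i
    using u[OF that] z by (auto simp: bij_betw_def inv_into_into f_inv_into_f)
  have "z \<in> u i ` S" if "i < n" for i
  proof -
    have "u i (inv_into N (u i) z) \<in> u i ` S" using that by (simp add: S_def)
    then show ?thesis using inv_z[OF that] by simp
  qed
  moreover have "finite S" "S \<subseteq> N" "z \<in> S"
    using S0(1,2) z inv_N by (auto simp: S_def)
  moreover have "cylinder n S u \<subseteq> B \<inter> Op m"
    using cylinder_antimono[of S0 S n u] S0(3) by (auto simp: S_def)
  ultimately show ?thesis using that by (auto simp: admissible_def z_def)
qed

lemma exists_refinement: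
  assumes Op: "openin (power_top TH n) (Op m)" "power_top TH n closure_of Op m = topspace (power_top TH n)"
    and V: "openin (power_top TG n) V" "g \<in> V"
    and B: "openin (power_top TH n) B" "u \<in> B"
    and near: "tuple_dist d n g (extend_tuple n u) < \<epsilon>"
  obtains S \<sigma> where "admissible n Op m (S, \<sigma>)" "cylinder n S \<sigma> \<subseteq> B" "V \<inter> fattened_cylinder n \<epsilon> (S, \<sigma>) \<noteq> {}"
proof -
  have u: "u \<in> PiE {..<n} (\<lambda>_. H)" using openin_subset[OF B(1)] B(2) by auto
  have g: "g \<in> PiE {..<n} (\<lambda>_. G)" using openin_subset[OF V(1)] V(2) by auto
  obtain Sc where Sc: "finite Sc" "Sc \<subseteq> N" "\<And>v. v \<in> cylinder n Sc u \<Longrightarrow> translate n g u v \<in> V"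
    using translate_near[OF V u] by blast
  have B': "openin (power_top TH n) (cylinder n Sc u \<inter> B)"
    using openin_cylinder[OF Sc(1,2)] B(1) by (rule openin_Int)
  moreover have "u \<in> cylinder n Sc u \<inter> B" using self_in_cylinder[OF u] B(2) by blast
  ultimately obtain u' where u': "u' \<in> cylinder n Sc u \<inter> B \<inter> Op m"
    using Op(2) unfolding dense_intersects_open by blast
  then obtain S where S: "admissible n Op m (S, u')" "cylinder n S u' \<subseteq> cylinder n Sc u \<inter> B"
    using admissible_cylinder_inside[where Op = Op and m = m, OF B' Op(1)] by blast
  have u'H: "u' \<in> PiE {..<n} (\<lambda>_. H)" using u' by (simp add: cylinder_def)
  have "tuple_dist d n (translate n g u u') (extend_tuple n u') < \<epsilon>"
    using tuple_dist_translate[OF u u'H, of g] near by simp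
  then have "translate n g u u' \<in> fattened_cylinder n \<epsilon> (S, u')"
    using translate_in[OF g u u'H] self_in_cylinder[OF u'H, of S]
    unfolding fattened_cylinder_def tuple_nbhd_def by blast
  moreover have "translate n g u u' \<in> V" using Sc(3) u' by blast
  ultimately show ?thesis using that S by blast
qed

lemma dense_fattened_empty_cylinder:
  assumes "\<epsilon> > 0"
  shows "power_top TG n closure_of fattened_cylinder n \<epsilon> ({}, \<sigma>) = topspace (power_top TG n)"
proof (rule antisym)
  have extensions: "extend_tuple n ` PiE {..<n} (\<lambda>_. H) \<subseteq> fattened_cylinder n \<epsilon> ({}, \<sigma>)"
  proof (rule image_subsetI)
    fix u assume u: "u \<in> PiE {..<n} (\<lambda>_. H)"
    then have "extend_tuple n u \<in> PiE {..<n} (\<lambda>_. G)" by (auto simp: PiE_iff extend_in)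
    moreover have "u \<in> cylinder n {} \<sigma>" using u by (simp add: cylinder_def)
    moreover have "tuple_dist d n (extend_tuple n u) (extend_tuple n u) < \<epsilon>"
      using assms by (simp add: tuple_dist_self)
    ultimately show "extend_tuple n u \<in> fattened_cylinder n \<epsilon> ({}, \<sigma>)"
      unfolding fattened_cylinder_def tuple_nbhd_def by blast
  qed
  show "topspace (power_top TG n) \<subseteq> power_top TG n closure_of fattened_cylinder n \<epsilon> ({}, \<sigma>)"
    using closure_of_mono[OF extensions, of "power_top TG n"] dense_extend_tuples[of n] by simp
qed (rule closure_of_subset_topspace)

lemma refining_child_meets:
  assumes Op: "openin (power_top TH n) (Op m)" "power_top TH n closure_of Op m = topspace (power_top TH n)"
    and S: "finite S" "S \<subseteq> N"
    and V: "openin (power_top TG n) V" "V \<noteq> {}" "V \<subseteq> fattened_cylinder n \<epsilon> (S, \<sigma>)"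
  shows "\<exists>t. refines n Op m (S, \<sigma>) t \<and> V \<inter> fattened_cylinder n \<epsilon> t \<noteq> {}"
proof -
  obtain g where g: "g \<in> V" using V(2) by blast
  then have "g \<in> tuple_nbhd d G n (extend_tuple n ` cylinder n S \<sigma>) \<epsilon>"
    using V(3) by (auto simp: fattened_cylinder_def)
  then obtain u where u: "u \<in> cylinder n S \<sigma>" "tuple_dist d n g (extend_tuple n u) < \<epsilon>"
    unfolding tuple_nbhd_def by blast
  obtain S' \<sigma>' where "admissible n Op m (S', \<sigma>')" "cylinder n S' \<sigma>' \<subseteq> cylinder n S \<sigma>"
    "V \<inter> fattened_cylinder n \<epsilon> (S', \<sigma>') \<noteq> {}"
    by (rule exists_refinement[where m = m and Op = Op, OF Op V(1) g openin_cylinder[OF S] u])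
  then show ?thesis by (intro exI[of _ "(S', \<sigma>')"]) (simp add: refines_def)
qed

text \<open>The root is the cylinder over the empty set, which is all of Aut(N)^n whatever its
  second component is.\<close>

lemma refining_tree_cylinders:
  assumes "\<epsilon> > 0" and Op: "\<And>m. openin (power_top TH n) (Op m)"
    "\<And>m. power_top TH n closure_of Op m = topspace (power_top TH n)"
  shows "refining_tree (power_top TG n) (fattened_cylinder n \<epsilon>) (\<lambda>(S, \<sigma>). finite S \<and> S \<subseteq> N)
           (refines n Op) ({}, undefined)"
proof
  show "openin (power_top TG n) (fattened_cylinder n \<epsilon> s)" if "case s of (S, \<sigma>) \<Rightarrow> finite S \<and> S \<subseteq> N" for s
    using that openin_fattened_cylinder[OF _ _ assms(1)] by (cases s) (simp add: fattened_cylinder_def)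
  show "power_top TG n closure_of fattened_cylinder n \<epsilon> ({}, undefined) = topspace (power_top TG n)"
    using assms(1) by (rule dense_fattened_empty_cylinder)
  show "case t of (S, \<sigma>) \<Rightarrow> finite S \<and> S \<subseteq> N" if "refines n Op m s t" for m s t
    using that by (cases s; cases t) (simp add: refines_def admissible_def)
  show "\<exists>t. refines n Op m s t \<and> V \<inter> fattened_cylinder n \<epsilon> t \<noteq> {}"
    if "case s of (S, \<sigma>) \<Rightarrow> finite S \<and> S \<subseteq> N" "openin (power_top TG n) V" "V \<noteq> {}"
      "V \<subseteq> fattened_cylinder n \<epsilon> s" for m s V
    using that refining_child_meets[OF Op] by (cases s) simp
qed simp

lemma nested_cylinders_agree:
  assumes nested: "\<And>m. cylinder n (S (Suc m)) (\<sigma> (Suc m)) \<subseteq> cylinder n (S m) (\<sigma> m)"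
    and c: "c \<in> cylinder n (S m') (\<sigma> m')" and "m \<le> m'" "i < n" "x \<in> S m"
  shows "c i x = \<sigma> m i x"
proof -
  have "cylinder n (S m') (\<sigma> m') \<subseteq> cylinder n (S m) (\<sigma> m)"
    using lift_Suc_antimono_le[of "\<lambda>m. cylinder n (S m) (\<sigma> m)", OF nested \<open>m \<le> m'\<close>] .
  then show ?thesis using c assms(4,5) by (auto simp: cylinder_def)
qed

lemma cylinder_chain_limit:
  assumes adm: "\<And>m. admissible n Op m (S m, \<sigma> m)"
    and nested: "\<And>m. cylinder n (S (Suc m)) (\<sigma> (Suc m)) \<subseteq> cylinder n (S m) (\<sigma> m)"
    and c: "\<And>m. c m \<in> cylinder n (S m) (\<sigma> m)"
  obtains a where "a \<in> PiE {..<n} (\<lambda>_. H)" "\<And>m. a \<in> cylinder n (S m) (\<sigma> m)"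
    "\<And>i x. i < n \<Longrightarrow> x \<in> N \<Longrightarrow> eventually (\<lambda>m. c m i x = a i x) sequentially"
proof -
  have S_N: "S m \<subseteq> N" for m using adm[of m] by (simp add: admissible_def)
  have stable: "c m' i x = \<sigma> m i x" if "m \<le> m'" "i < n" "x \<in> S m" for m m' i x
    using nested_cylinders_agree[OF nested c that] .
  define lvl where "lvl x = to_nat_on N x" for x
  have lvl: "x \<in> S (lvl x)" if "x \<in> N" for x
    using adm[of "lvl x"] that countable_N by (simp add: admissible_def lvl_def)
  define a where "a = (\<lambda>i\<in>{..<n}. \<lambda>x\<in>N. \<sigma> (lvl x) i x)"
  have lim: "eventually (\<lambda>m. c m i x = a i x) sequentially" if "i < n" "x \<in> N" for i x
    unfolding eventually_sequentially using stable[OF _ that(1) lvl[OF that(2)]] that by (auto simp: a_def)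
  have a_S: "a i x = \<sigma> m i x" if "i < n" "x \<in> S m" for i x m
  proof -
    have "x \<in> N" using S_N that(2) by blast
    then have "a i x = c (max m (lvl x)) i x" using stable[OF _ that(1) lvl] that(1) by (simp add: a_def)
    also have "\<dots> = \<sigma> m i x" using stable that by simp
    finally show ?thesis .
  qed
  have c_H: "c m i \<in> H" if "i < n" for m i using c[of m] that by (auto simp: cylinder_def)
  have "a i \<in> H" if "i < n" for i
  proof (rule AutN_pointwise_limit[OF classical])
    show "c m i \<in> H" for m using c_H[OF that] .
    show "a i \<in> extensional N" using that by (simp add: a_def)
    show "eventually (\<lambda>m. c m i x = a i x) sequentially" if "x \<in> N" for x using lim \<open>i < n\<close> that .
    show "N \<subseteq> a i ` N"
    proof
      fix y assume "y \<in> N"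
      then have "y \<in> \<sigma> (lvl y) i ` S (lvl y)"
        using adm[of "lvl y"] countable_N \<open>i < n\<close> by (simp add: admissible_def lvl_def)
      then obtain x where x: "x \<in> S (lvl y)" "y = \<sigma> (lvl y) i x" by blast
      then have "y = a i x" using a_S[OF \<open>i < n\<close> x(1)] by simp
      moreover have "x \<in> N" using S_N x(1) by blast
      ultimately show "y \<in> a i ` N" by blast
    qed
  qed
  then have "a \<in> PiE {..<n} (\<lambda>_. H)" by (simp add: a_def)
  moreover have "a \<in> cylinder n (S m) (\<sigma> m)" for m using calculation a_S by (simp add: cylinder_def)
  ultimately show ?thesis using that lim by blast
qed

lemma branch_limit:
  assumes "\<epsilon> > 0" and g: "g \<in> PiE {..<n} (\<lambda>_. G)"
    and branch: "\<And>m. refines n Op m (b m) (b (Suc m))" "\<And>m. g \<in> fattened_cylinder n \<epsilon> (b m)"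
  obtains a where "a \<in> PiE {..<n} (\<lambda>_. H)" "\<And>m. a \<in> Op m" "tuple_dist d n g (extend_tuple n a) \<le> \<epsilon>"
proof -
  define S where "S m = fst (b (Suc m))" for m
  define \<sigma> where "\<sigma> m = snd (b (Suc m))" for m
  have adm: "admissible n Op m (S m, \<sigma> m)" for m
    using branch(1)[of m] by (cases "b m") (simp add: refines_def S_def \<sigma>_def split: prod.splits)
  have nested: "cylinder n (S (Suc m)) (\<sigma> (Suc m)) \<subseteq> cylinder n (S m) (\<sigma> m)" for m
    using branch(1)[of "Suc m"] by (simp add: refines_def S_def \<sigma>_def split: prod.splits)
  have "\<forall>m. \<exists>c. c \<in> cylinder n (S m) (\<sigma> m) \<and> tuple_dist d n g (extend_tuple n c) < \<epsilon>"
  proof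
    fix m
    have "b (Suc m) = (S m, \<sigma> m)" by (simp add: S_def \<sigma>_def)
    then show "\<exists>c. c \<in> cylinder n (S m) (\<sigma> m) \<and> tuple_dist d n g (extend_tuple n c) < \<epsilon>"
      using branch(2)[of "Suc m"] by (auto simp: fattened_cylinder_def tuple_nbhd_def)
  qed
  from choice[OF this] obtain c where c: "\<And>m. c m \<in> cylinder n (S m) (\<sigma> m)"
    and c_near: "\<And>m. tuple_dist d n g (extend_tuple n (c m)) < \<epsilon>"
    by blast
  obtain a where a: "a \<in> PiE {..<n} (\<lambda>_. H)" "\<And>m. a \<in> cylinder n (S m) (\<sigma> m)"
    and lim: "\<And>i x. i < n \<Longrightarrow> x \<in> N \<Longrightarrow> eventually (\<lambda>m. c m i x = a i x) sequentially"
    using cylinder_chain_limit[where S = S and \<sigma> = \<sigma> and c = c, OF adm nested c] by blast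
  have "a \<in> Op m" for m using a(2)[of m] adm[of m] by (auto simp: admissible_def)
  moreover have "tuple_dist d n g (extend_tuple n a) \<le> \<epsilon>"
  proof (rule tuple_dist_least)
    show "0 \<le> \<epsilon>" using assms(1) by simp
    fix i assume "i < n"
    have "unif_dist d (g i) (extend (c m i)) < \<epsilon>" for m
      using c_near[of m] assms(1) \<open>i < n\<close> by (simp add: tuple_dist_less_iff)
    then have "unif_dist d (g i) (extend (a i)) \<le> \<epsilon>"
      using unif_dist_extend_limit[of "g i" "\<lambda>m. c m i" "a i"] g a(1) c lim \<open>i < n\<close>
      by (auto simp: PiE_iff cylinder_def)
    then show "unif_dist d (g i) (extend_tuple n a i) \<le> \<epsilon>" using \<open>i < n\<close> by simp
  qed
  ultimately show ?thesis using that a(1) by blast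
qed

lemma comeagre_near_extensions:
  assumes "\<epsilon> > 0" "comeagre_in (power_top TH n) A"
  shows "comeagre_in (power_top TG n)
           {g \<in> topspace (power_top TG n). \<exists>a\<in>A. tuple_dist d n g (extend_tuple n a) \<le> \<epsilon>}"
proof -
  obtain Op :: "nat \<Rightarrow> (nat \<Rightarrow> 'a \<Rightarrow> 'a) set" where Op: "\<And>m. openin (power_top TH n) (Op m)"
    "\<And>m. power_top TH n closure_of Op m = topspace (power_top TH n)"
    "topspace (power_top TH n) \<inter> (\<Inter>m. Op m) \<subseteq> A"
    using comeagre_in_obtains_dense_opens[OF assms(2)] by blast
  interpret T: refining_tree "power_top TG n" "fattened_cylinder n \<epsilon>" "\<lambda>(S, \<sigma>). finite S \<and> S \<subseteq> N"
    "refines n Op" "({}, undefined)"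
    using refining_tree_cylinders[OF assms(1) Op(1,2)] .
  have "\<exists>a\<in>A. tuple_dist d n g (extend_tuple n a) \<le> \<epsilon>"
    if g: "g \<in> topspace (power_top TG n)"
      and b: "\<forall>m. refines n Op m (b m) (b (Suc m)) \<and> g \<in> fattened_cylinder n \<epsilon> (b m)" for g b
  proof -
    obtain a where "a \<in> PiE {..<n} (\<lambda>_. H)" "\<And>m. a \<in> Op m" "tuple_dist d n g (extend_tuple n a) \<le> \<epsilon>"
      using branch_limit[OF assms(1), where n = n and g = g and Op = Op and b = b] g b by auto
    then show ?thesis using Op(3) by auto
  qed
  then show ?thesis
    by (intro comeagre_in_mono[OF T.comeagre_in_branch_points]) auto
qed

lemma comeagre_dclosure_extensions:
  assumes "comeagre_in (power_top TH n) A"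
  shows "comeagre_in (power_top TG n) (tuple_dclosure d G n (extend_tuple n ` A))"
proof (rule comeagre_in_mono)
  let ?near = "\<lambda>k. {g \<in> topspace (power_top TG n).
                  \<exists>a\<in>A. tuple_dist d n g (extend_tuple n a) \<le> 1 / Suc k}"
  show "comeagre_in (power_top TG n) (\<Inter>k. ?near k)"
    using comeagre_near_extensions[OF _ assms] by (intro comeagre_in_Inter) simp
  show "(\<Inter>k. ?near k) \<subseteq> tuple_dclosure d G n (extend_tuple n ` A)"
  proof
    fix g assume g: "g \<in> (\<Inter>k. ?near k)"
    have "\<exists>b\<in>extend_tuple n ` A. tuple_dist d n g b < \<epsilon>" if \<epsilon>: "\<epsilon> > 0" for \<epsilon>
    proof -
      obtain k where k: "1 / Suc k < \<epsilon>" using nat_approx_posE[OF \<epsilon>] by blast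
      obtain a where "a \<in> A" "tuple_dist d n g (extend_tuple n a) \<le> 1 / Suc k" using g by blast
      then show ?thesis using k by force
    qed
    then show "g \<in> tuple_dclosure d G n (extend_tuple n ` A)"
      using g by (auto simp: tuple_dclosure_def)
  qed
  show "tuple_dclosure d G n (extend_tuple n ` A) \<subseteq> topspace (power_top TG n)"
    by (auto simp: tuple_dclosure_def)
qed

lemma extend_diag_conj_classN:
  assumes "gs \<in> PiE {..<n} (\<lambda>_. H)" "diag_conj_classN H N n gs \<subseteq> PiE {..<n} (\<lambda>_. H)"
  shows "extend_tuple n ` diag_conj_classN H N n gs \<subseteq> diag_conj_classM G n (extend_tuple n gs)"
proof
  fix b assume "b \<in> extend_tuple n ` diag_conj_classN H N n gs"
  then obtain k where k: "k \<in> H"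
    and b: "b = extend_tuple n (\<lambda>i\<in>{..<n}. restrict (k \<circ> gs i \<circ> inv_into N k) N)"
    and conj: "(\<lambda>i\<in>{..<n}. restrict (k \<circ> gs i \<circ> inv_into N k) N) \<in> diag_conj_classN H N n gs"
    unfolding diag_conj_classN_def by blast
  have "restrict (k \<circ> gs i \<circ> inv_into N k) N \<in> H" if "i < n" for i
    using PiE_mem[OF subsetD[OF assms(2) conj], of i] that by simp
  then have "b = (\<lambda>i\<in>{..<n}. extend k \<circ> extend_tuple n gs i \<circ> inv (extend k))"
    unfolding b using assms(1) by (intro restrict_ext) (simp add: extend_conj[OF k] PiE_iff)
  then show "b \<in> diag_conj_classM G n (extend_tuple n gs)"
    unfolding diag_conj_classM_def using extend_in[OF k] by blast
qed

lemma topometric_ample_generics: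
  assumes "ample_generics_AutN N H TH"
  shows "topometric_ample_generics_AutM d G TG"
  unfolding topometric_ample_generics_AutM_def
proof (intro allI impI)
  fix n :: nat and \<epsilon> :: real assume "\<epsilon> > 0"
  obtain gs where gs: "gs \<in> PiE {..<n} (\<lambda>_. H)" "comeagre_in (power_top TH n) (diag_conj_classN H N n gs)"
    using assms unfolding ample_generics_AutN_def by blast
  then have "diag_conj_classN H N n gs \<subseteq> PiE {..<n} (\<lambda>_. H)" by (simp add: comeagre_in_def)
  then have "tuple_dclosure d G n (extend_tuple n ` diag_conj_classN H N n gs)
               \<subseteq> tuple_nbhd d G n (diag_conj_classM G n (extend_tuple n gs)) \<epsilon>"
    using tuple_dclosure_subset_tuple_nbhd[OF extend_diag_conj_classN[OF gs(1)] \<open>\<epsilon> > 0\<close>] by blast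
  then have "comeagre_in (power_top TG n) (tuple_nbhd d G n (diag_conj_classM G n (extend_tuple n gs)) \<epsilon>)"
    by (rule comeagre_in_mono[OF comeagre_dclosure_extensions[OF gs(2)]]) (auto simp: tuple_nbhd_def)
  moreover have "extend_tuple n gs \<in> PiE {..<n} (\<lambda>_. G)" using gs(1) by (auto simp: PiE_iff extend_in)
  ultimately show "\<exists>gs\<in>PiE {..<n} (\<lambda>_. G).
      comeagre_in (power_top TG n) (tuple_nbhd d G n (diag_conj_classM G n gs) \<epsilon>)"
    by blast
qed

end

theorem theorem5p6:
  fixes d :: "'a \<Rightarrow> 'a \<Rightarrow> real"
    and arP :: "'i \<Rightarrow> nat" and P :: "'i \<Rightarrow> 'a list \<Rightarrow> real"
    and arF :: "'j \<Rightarrow> nat" and f :: "'j \<Rightarrow> 'a list \<Rightarrow> 'a"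
    and N :: "'a set"
    and arR :: "'r \<Rightarrow> nat" and R :: "'r \<Rightarrow> 'a list \<Rightarrow> bool"
    and arG :: "'k \<Rightarrow> nat" and F :: "'k \<Rightarrow> 'a list \<Rightarrow> 'a"
  assumes "polish_metric_structure d arP P arF f"
    and "good_approx_substructure d arP P arF f N arR R arG F"
  shows "(\<forall>n A. A \<subseteq> PiE {..<n} (\<lambda>_. AutN N arR R arG F) \<longrightarrow>
              comeagre_in (power_top (tauN N arR R arG F) n) A \<longrightarrow>
              comeagre_in (power_top (tauM d arP P arF f) n)
                (tuple_dclosure d (AutM d arP P arF f) n
                   ((\<lambda>hs. \<lambda>i\<in>{..<n}. ext_aut (AutM d arP P arF f) N (hs i)) ` A)))
       \<and> (ample_generics_AutN N (AutN N arR R arG F) (tauN N arR R arG F) \<longrightarrow>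
          topometric_ample_generics_AutM d (AutM d arP P arF f) (tauM d arP P arF f))"
proof -
  interpret good_approximation d arP P arF f N arR R arG F
    using assms by unfold_locales
  have "comeagre_in (power_top TG n) (tuple_dclosure d G n (extend_tuple n ` A))"
    if "comeagre_in (power_top TH n) A" for n A
    using that by (rule comeagre_dclosure_extensions)
  then show ?thesis using topometric_ample_generics by blast
qed

end
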